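(* For every bipartite state $\rho$ on $\mathcal{H}^A\otimes\mathcal{H}^B$ ($\dim\mathcal{H}^A=m$, $\dim\mathcal{H}^B=n$), $D_P(\rho)\le D_G(\rho)$, where $D_P(\rho)=\min_P\|\mathcal{T}-P\mathcal{T}\|^2$ (minimum over rank-$(m-1)$ orthogonal projections $P$ on $\mathbb{R}^{m^2-1}$, Frobenius norm) and $D_G(\rho)=\min_{\chi}\mathrm{Tr}(\rho-\chi)^2$ with the minimum over all zero-discord states $\chi$.
   Context: Generators $\hat\lambda_i^A$ ($i=1,\dots,m^2-1$) of $SU(m)$ and $\hat\lambda_j^B$ of $SU(n)$ are Hermitian, traceless, with $\mathrm{Tr}(\hat\lambda_i\hat\lambda_j)=2\delta_{ij}$. For a state $\rho$, $x_i=\frac{m}{2}\mathrm{Tr}[(\hat\lambda_i^A\otimes\mathbb{I})\rho]$, $t_{ij}=\frac{mn}{4}\mathrm{Tr}[(\hat\lambda_i^A\otimes\hat\lambda_j^B)\rho]$, $T=(t_{ij})$, and the left-correlation matrix is $\mathcal{T}=\sqrt{\frac{2}{m^2n}}\begin{pmatrix}\vec{x} & \sqrt{\frac{2}{n}}T\end{pmatrix}$. A state $\chi$ is zero-discord (classical-quantum) if $\chi=\sum_{k=1}^m p_k|k\rangle\langle k|\otimes\rho_k^B$ for some orthonormal basis $\{|k\rangle\}$ of $\mathcal{H}^A$, probabilities $p_k$ and states $\rho_k^B$ on $\mathcal{H}^B$. *)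

theory Defs
  imports "Jordan_Normal_Form.Matrix" "Jordan_Normal_Form.DL_Rank"
begin

definition mtrace :: "'a::comm_ring_1 mat \<Rightarrow> 'a" where
  "mtrace A = (\<Sum>i<dim_row A. A $$ (i,i))"

(* Kronecker (tensor) product; basis |a> (x) |b> has index a * dim B + b *)
definition kron :: "complex mat \<Rightarrow> complex mat \<Rightarrow> complex mat" where
  "kron A B = mat (dim_row A * dim_row B) (dim_col A * dim_col B)
     (\<lambda>(i,j). A $$ (i div dim_row B, j div dim_col B) * B $$ (i mod dim_row B, j mod dim_col B))"

definition outer :: "complex vec \<Rightarrow> complex vec \<Rightarrow> complex mat" where
  "outer v w = mat (dim_vec v) (dim_vec w) (\<lambda>(i,j). v $ i * cnj (w $ j))"

definition hermitian_mat :: "nat \<Rightarrow> complex mat \<Rightarrow> bool" where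
  "hermitian_mat d A \<longleftrightarrow> A \<in> carrier_mat d d \<and>
     (\<forall>i<d. \<forall>j<d. A $$ (i,j) = cnj (A $$ (j,i)))"

definition psd_mat :: "nat \<Rightarrow> complex mat \<Rightarrow> bool" where
  "psd_mat d A \<longleftrightarrow> A \<in> carrier_mat d d \<and>
     (\<forall>v\<in>carrier_vec d. let q = (\<Sum>i<d. cnj (v $ i) * (A *\<^sub>v v) $ i) in Im q = 0 \<and> Re q \<ge> 0)"

definition is_state :: "nat \<Rightarrow> complex mat \<Rightarrow> bool" where
  "is_state d \<rho> \<longleftrightarrow> hermitian_mat d \<rho> \<and> psd_mat d \<rho> \<and> mtrace \<rho> = 1"

definition su_generators :: "nat \<Rightarrow> (nat \<Rightarrow> complex mat) \<Rightarrow> bool" where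
  "su_generators d lam \<longleftrightarrow>
     (\<forall>i<d^2-1. hermitian_mat d (lam i) \<and> mtrace (lam i) = 0) \<and>
     (\<forall>i<d^2-1. \<forall>j<d^2-1. mtrace (lam i * lam j) = (if i = j then 2 else 0))"

definition orthonormal_basis :: "nat \<Rightarrow> (nat \<Rightarrow> complex vec) \<Rightarrow> bool" where
  "orthonormal_basis d e \<longleftrightarrow> (\<forall>k<d. e k \<in> carrier_vec d) \<and>
     (\<forall>k<d. \<forall>l<d. (\<Sum>i<d. cnj (e k $ i) * e l $ i) = (if k = l then 1 else 0))"

definition zero_discord :: "nat \<Rightarrow> nat \<Rightarrow> complex mat \<Rightarrow> bool" where
  "zero_discord m n \<chi> \<longleftrightarrow> (\<exists>e p \<rho>k. orthonormal_basis m e \<and>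
     (\<forall>k<m. p k \<ge> (0::real)) \<and> (\<Sum>k<m. p k) = 1 \<and> (\<forall>k<m. is_state n (\<rho>k k)) \<and>
     \<chi> = mat (m*n) (m*n) (\<lambda>(i,j). \<Sum>k<m. complex_of_real (p k) *
                                   kron (outer (e k) (e k)) (\<rho>k k) $$ (i,j)))"

definition bloch_x :: "nat \<Rightarrow> nat \<Rightarrow> (nat \<Rightarrow> complex mat) \<Rightarrow> complex mat \<Rightarrow> nat \<Rightarrow> real" where
  "bloch_x m n lamA \<rho> i = real m / 2 * Re (mtrace (kron (lamA i) (1\<^sub>m n) * \<rho>))"

definition corr_t :: "nat \<Rightarrow> nat \<Rightarrow> (nat \<Rightarrow> complex mat) \<Rightarrow> (nat \<Rightarrow> complex mat)
                     \<Rightarrow> complex mat \<Rightarrow> nat \<Rightarrow> nat \<Rightarrow> real" where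
  "corr_t m n lamA lamB \<rho> i j = real (m*n) / 4 * Re (mtrace (kron (lamA i) (lamB j) * \<rho>))"

definition left_corr :: "nat \<Rightarrow> nat \<Rightarrow> (nat \<Rightarrow> complex mat) \<Rightarrow> (nat \<Rightarrow> complex mat)
                         \<Rightarrow> complex mat \<Rightarrow> real mat" where
  "left_corr m n lamA lamB \<rho> = mat (m^2-1) (1 + (n^2-1)) (\<lambda>(i,j).
     sqrt (2 / (real m ^ 2 * real n)) *
       (if j = 0 then bloch_x m n lamA \<rho> i
        else sqrt (2 / real n) * corr_t m n lamA lamB \<rho> i (j - 1)))"

definition frob_sq :: "real mat \<Rightarrow> real" where
  "frob_sq A = (\<Sum>i<dim_row A. \<Sum>j<dim_col A. (A $$ (i,j))^2)"

definition orth_proj_rank :: "nat \<Rightarrow> nat \<Rightarrow> real mat \<Rightarrow> bool" where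
  "orth_proj_rank d r P \<longleftrightarrow> P \<in> carrier_mat d d \<and> P\<^sup>T = P \<and> P * P = P \<and>
     vec_space.rank d P = r"

definition D_P :: "nat \<Rightarrow> nat \<Rightarrow> (nat \<Rightarrow> complex mat) \<Rightarrow> (nat \<Rightarrow> complex mat)
                   \<Rightarrow> complex mat \<Rightarrow> real" where
  "D_P m n lamA lamB \<rho> = Inf {frob_sq (left_corr m n lamA lamB \<rho> - P * left_corr m n lamA lamB \<rho>)
                             | P. orth_proj_rank (m^2-1) (m-1) P}"

definition D_G :: "nat \<Rightarrow> nat \<Rightarrow> complex mat \<Rightarrow> real" where
  "D_G m n \<rho> = Inf {Re (mtrace ((\<rho> - \<chi>) * (\<rho> - \<chi>))) | \<chi>. zero_discord m n \<chi>}"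

end

theory Submission
  imports Defs
begin

text \<open>
  Write a zero-discord state as \<open>\<chi> = \<Sum>\<^sub>k p\<^sub>k |e\<^sub>k\<rangle>\<langle>e\<^sub>k| \<otimes> \<rho>\<^sub>k\<close>. The Bloch vectors
  \<open>a\<^sub>k = (Tr (\<lambda>\<^sub>s |e\<^sub>k\<rangle>\<langle>e\<^sub>k|))\<^sub>s\<close> of the basis projectors form a regular simplex centred at the
  origin (\<open>\<langle>a\<^sub>k, a\<^sub>l\<rangle> = 2\<delta>\<^sub>k\<^sub>l - 2/m\<close>, \<open>\<Sum>\<^sub>k a\<^sub>k = 0\<close>), so \<open>P = \<onehalf> \<Sum>\<^sub>k a\<^sub>k a\<^sub>k\<^sup>T\<close> is an
  orthogonal projection of rank \<open>m - 1\<close>. Every column of the left-correlation matrix of \<open>\<chi>\<close>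
  is a combination of the \<open>a\<^sub>k\<close>, hence fixed by \<open>P\<close>; therefore
  \<open>\<parallel>\<T>\<^sub>\<rho> - P\<T>\<^sub>\<rho>\<parallel>\<^sup>2 = \<parallel>(1 - P)(\<T>\<^sub>\<rho> - \<T>\<^sub>\<chi>)\<parallel>\<^sup>2 \<le> \<parallel>\<T>\<^sub>\<rho>\<^sub>-\<^sub>\<chi>\<parallel>\<^sup>2 \<le> Tr (\<rho> - \<chi>)\<^sup>2\<close>,
  the last step being Bessel's inequality for the orthogonal family \<open>\<lambda>\<^sub>i \<otimes> 1, \<lambda>\<^sub>i \<otimes> \<lambda>\<^sub>j\<close>
  in the Hilbert-Schmidt inner product.
\<close>

definition tr_prod :: "nat \<Rightarrow> complex mat \<Rightarrow> complex mat \<Rightarrow> complex" where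
  "tr_prod d A B = (\<Sum>i<d. \<Sum>j<d. A $$ (i,j) * B $$ (j,i))"

lemma mult_add_less: "a < m \<Longrightarrow> b < n \<Longrightarrow> a * n + b < m * (n::nat)"
proof -
  assume "a < m" "b < n"
  then have "a * n + b < Suc a * n" by simp
  also have "\<dots> \<le> m * n" using \<open>a < m\<close> by (intro mult_le_mono1) simp
  finally show ?thesis .
qed

lemma sum_lessThan_mult: "(\<Sum>p<m*n. f p) = (\<Sum>a<m. \<Sum>b<n. f (a*n+b :: nat))"
proof -
  have "(\<Sum>b<n. f (a*n+b)) = sum f {a*n..<a*n+n}" for a
    using sum.shift_bounds_nat_ivl[of f 0 "a*n" n]
    by (simp add: atLeast0LessThan add.commute)
  then show ?thesis by (simp add: sum.nat_group)
qed

lemma mtrace_mult: "A \<in> carrier_mat d d \<Longrightarrow> B \<in> carrier_mat d d \<Longrightarrow> mtrace (A*B) = tr_prod d A B"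
  unfolding mtrace_def tr_prod_def by (auto simp: scalar_prod_def intro!: sum.cong)

lemma tr_prod_commute: "tr_prod d A B = tr_prod d B A"
  unfolding tr_prod_def by (subst sum.swap) (simp add: mult.commute)

lemma tr_prod_one_left: "tr_prod d (1\<^sub>m d) A = (\<Sum>i<d. A $$ (i,i))"
  unfolding tr_prod_def
proof (intro sum.cong refl)
  fix i assume "i \<in> {..<d}"
  then have "(\<Sum>j<d. 1\<^sub>m d $$ (i,j) * A $$ (j,i)) = (\<Sum>j<d. if i = j then A $$ (i,i) else 0)"
    by (intro sum.cong refl) auto
  then show "(\<Sum>j<d. 1\<^sub>m d $$ (i,j) * A $$ (j,i)) = A $$ (i,i)" using \<open>i \<in> {..<d}\<close> by simp
qed

lemma tr_prod_minus_right:
  "A \<in> carrier_mat d d \<Longrightarrow> B \<in> carrier_mat d d \<Longrightarrow> tr_prod d G (A - B) = tr_prod d G A - tr_prod d G B"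
  unfolding tr_prod_def by (simp add: right_diff_distrib sum_subtractf)

lemma kron_carrier: "A \<in> carrier_mat m m \<Longrightarrow> B \<in> carrier_mat n n \<Longrightarrow> kron A B \<in> carrier_mat (m*n) (m*n)"
  by (simp add: kron_def)

lemma kron_index: "A \<in> carrier_mat m m \<Longrightarrow> B \<in> carrier_mat n n \<Longrightarrow> p < m*n \<Longrightarrow> q < m*n \<Longrightarrow>
  kron A B $$ (p,q) = A $$ (p div n, q div n) * B $$ (p mod n, q mod n)"
  by (simp add: kron_def)

lemma tr_prod_kron:
  assumes A: "A \<in> carrier_mat m m" and C: "C \<in> carrier_mat m m"
    and B: "B \<in> carrier_mat n n" and D: "D \<in> carrier_mat n n"
  shows "tr_prod (m*n) (kron A B) (kron C D) = tr_prod m A C * tr_prod n B D"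
proof -
  have entry: "kron A B $$ (a*n+b, c*n+d) * kron C D $$ (c*n+d, a*n+b) =
      (A$$(a,c) * C$$(c,a)) * (B$$(b,d) * D$$(d,b))"
    if "a<m" "b<n" "c<m" "d<n" for a b c d
    using that mult_add_less[of _ m _ n] kron_index[OF A B, of "a*n+b" "c*n+d"]
      kron_index[OF C D, of "c*n+d" "a*n+b"]
    by (simp add: ac_simps)
  have "tr_prod (m*n) (kron A B) (kron C D) =
     (\<Sum>a<m. \<Sum>b<n. \<Sum>c<m. \<Sum>d<n. (A$$(a,c) * C$$(c,a)) * (B$$(b,d) * D$$(d,b)))"
    unfolding tr_prod_def sum_lessThan_mult by (intro sum.cong refl) (simp add: entry)
  also have "\<dots> = (\<Sum>a<m. \<Sum>c<m. \<Sum>b<n. \<Sum>d<n. (A$$(a,c) * C$$(c,a)) * (B$$(b,d) * D$$(d,b)))"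
    by (rule sum.cong[OF refl], rule sum.swap)
  also have "\<dots> = tr_prod m A C * tr_prod n B D"
    by (unfold tr_prod_def sum_distrib_right, unfold sum_distrib_left, rule refl)
  finally show ?thesis .
qed

lemma hermitian_mat_carrier: "hermitian_mat d A \<Longrightarrow> A \<in> carrier_mat d d"
  unfolding hermitian_mat_def by blast

lemma hermitian_mat_cnj: "hermitian_mat d A \<Longrightarrow> i < d \<Longrightarrow> j < d \<Longrightarrow> cnj (A $$ (i,j)) = A $$ (j,i)"
  unfolding hermitian_mat_def by metis

lemma hermitian_matI:
  "A \<in> carrier_mat d d \<Longrightarrow> (\<And>i j. i < d \<Longrightarrow> j < d \<Longrightarrow> cnj (A $$ (i,j)) = A $$ (j,i)) \<Longrightarrow> hermitian_mat d A"
  unfolding hermitian_mat_def by (metis complex_cnj_cnj)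

lemma hermitian_state: "is_state d \<rho> \<Longrightarrow> hermitian_mat d \<rho>"
  unfolding is_state_def by blast

lemma hermitian_mat_one: "hermitian_mat n (1\<^sub>m n)"
  by (rule hermitian_matI) auto

lemma hermitian_mat_minus:
  assumes "hermitian_mat d A" "hermitian_mat d B"
  shows "hermitian_mat d (A - B)"
  using hermitian_mat_carrier[OF assms(2)] hermitian_mat_carrier[OF assms(1)]
    hermitian_mat_cnj[OF assms(1)] hermitian_mat_cnj[OF assms(2)]
  by (intro hermitian_matI) auto

lemma hermitian_mat_kron:
  assumes A: "hermitian_mat m A" and B: "hermitian_mat n B"
  shows "hermitian_mat (m*n) (kron A B)"
proof (rule hermitian_matI)
  have Ac: "A \<in> carrier_mat m m" and Bc: "B \<in> carrier_mat n n" using A B hermitian_mat_carrier by auto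
  show "kron A B \<in> carrier_mat (m*n) (m*n)" using kron_carrier[OF Ac Bc] .
  fix i j assume ij: "i < m*n" "j < m*n"
  then have "n > 0" by (cases n) auto
  then have "i div n < m" "j div n < m" "i mod n < n" "j mod n < n"
    using ij by (auto simp: less_mult_imp_div_less)
  then show "cnj (kron A B $$ (i,j)) = kron A B $$ (j,i)"
    unfolding kron_index[OF Ac Bc ij] kron_index[OF Ac Bc ij(2,1)]
    using hermitian_mat_cnj[OF A] hermitian_mat_cnj[OF B] by simp
qed

lemma Im_tr_prod_hermitian:
  assumes "hermitian_mat d A" "hermitian_mat d B"
  shows "Im (tr_prod d A B) = 0"
proof -
  have "cnj (tr_prod d A B) = tr_prod d B A"
    unfolding tr_prod_def cnj_sum
    using hermitian_mat_cnj[OF assms(1)] hermitian_mat_cnj[OF assms(2)]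
    by (intro sum.cong refl) (simp add: mult.commute)
  then have "cnj (tr_prod d A B) = tr_prod d A B" using tr_prod_commute by metis
  then show ?thesis by (simp add: complex_eq_iff)
qed

lemma tr_prod_self_hermitian:
  assumes "hermitian_mat d A"
  shows "tr_prod d A A = (\<Sum>p<d. \<Sum>q<d. complex_of_real ((cmod (A $$ (p,q)))\<^sup>2))"
proof -
  have "A $$ (p,q) * A $$ (q,p) = complex_of_real ((cmod (A $$ (p,q)))\<^sup>2)" if "p < d" "q < d" for p q
    using hermitian_mat_cnj[OF assms that] by (metis complex_mult_cnj cmod_power2)
  then show ?thesis unfolding tr_prod_def by (intro sum.cong refl) simp
qed

lemma outer_carrier: "v \<in> carrier_vec m \<Longrightarrow> outer v v \<in> carrier_mat m m"
  by (simp add: outer_def)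

lemma outer_index: "i < dim_vec v \<Longrightarrow> j < dim_vec w \<Longrightarrow> outer v w $$ (i,j) = v$i * cnj (w$j)"
  by (simp add: outer_def)

lemma hermitian_mat_outer: "v \<in> carrier_vec m \<Longrightarrow> hermitian_mat m (outer v v)"
  by (rule hermitian_matI) (auto simp: outer_def)

lemma sum_right_inverse_imp_left_inverse:
  fixes f g :: "nat \<Rightarrow> nat \<Rightarrow> 'a::field"
  assumes inv: "\<And>i j. i<n \<Longrightarrow> j<n \<Longrightarrow> (\<Sum>k<n. f i k * g k j) = (if i=j then 1 else 0)"
    and "i < n" "j < n"
  shows "(\<Sum>k<n. g i k * f k j) = (if i=j then 1 else 0)"
proof -
  let ?A = "mat n n (\<lambda>(i,j). f i j)" and ?B = "mat n n (\<lambda>(i,j). g i j)"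
  have AB: "?A * ?B = 1\<^sub>m n"
  proof (rule eq_matI)
    fix i j assume "i < dim_row (1\<^sub>m n :: 'a mat)" "j < dim_col (1\<^sub>m n :: 'a mat)"
    then show "(?A * ?B) $$ (i,j) = 1\<^sub>m n $$ (i,j)"
      using inv by (simp add: scalar_prod_def atLeast0LessThan)
  qed simp_all
  have "?B * ?A = 1\<^sub>m n" by (rule mat_mult_left_right_inverse[OF _ _ AB]) simp_all
  then have "(?B * ?A) $$ (i,j) = 1\<^sub>m n $$ (i,j)" by simp
  then show ?thesis using assms(2,3) by (simp add: scalar_prod_def atLeast0LessThan)
qed

lemma orthonormal_basis_carrier: "orthonormal_basis m e \<Longrightarrow> k < m \<Longrightarrow> e k \<in> carrier_vec m"
  unfolding orthonormal_basis_def by blast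

lemma orthonormal_basis_dim: "orthonormal_basis m e \<Longrightarrow> k < m \<Longrightarrow> dim_vec (e k) = m"
  by (rule carrier_vecD[OF orthonormal_basis_carrier])

lemma orthonormal_basis_orth: "orthonormal_basis m e \<Longrightarrow> k < m \<Longrightarrow> l < m \<Longrightarrow>
   (\<Sum>i<m. cnj (e k $ i) * e l $ i) = (if k = l then 1 else 0)"
  unfolding orthonormal_basis_def by blast

lemma orthonormal_basis_complete:
  assumes "orthonormal_basis m e" "a < m" "b < m"
  shows "(\<Sum>k<m. e k $ a * cnj (e k $ b)) = (if a = b then 1 else 0)"
  using sum_right_inverse_imp_left_inverse[of m "\<lambda>i k. cnj (e i $ k)" "\<lambda>k j. e j $ k",
      OF orthonormal_basis_orth[OF assms(1)] assms(2,3)]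
  by simp

lemma unit_vec_orthonormal_basis: "orthonormal_basis m (unit_vec m)"
  unfolding orthonormal_basis_def
proof (intro conjI allI impI)
  fix k l assume "k < m" "l < m"
  have "(\<Sum>i<m. cnj (unit_vec m k $ i) * unit_vec m l $ i) =
      (\<Sum>i<m. if i = k then (if k = l then 1 else 0) else 0)"
    by (intro sum.cong refl) (auto simp: unit_vec_def)
  then show "(\<Sum>i<m. cnj (unit_vec m k $ i) * unit_vec m l $ i) = (if k = l then 1 else 0)"
    using \<open>k < m\<close> by simp
qed auto

lemma sum_sum_mult_delta:
  assumes "a < m" "b < (m::nat)"
  shows "(\<Sum>c<m. \<Sum>d<m. F c d * (if a = c \<and> b = d then z else 0)) = F a b * (z::'a::comm_semiring_1)"
proof -
  have "(\<Sum>d<m. F c d * (if a = c \<and> b = d then z else 0)) = (if a = c then F a b * z else 0)" for c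
    using assms by (cases "c = a") (auto simp: if_distrib cong: if_cong)
  then show ?thesis using assms by simp
qed

lemma sum_sum_mult_delta_diag:
  "(\<Sum>c<m. \<Sum>d<(m::nat). F c d * (if a = b \<and> c = d then z else 0)) =
   (if a = b then (\<Sum>c<m. F c c) * (z::'a::comm_semiring_1) else 0)"
  by (cases "a = b") (simp_all add: sum_distrib_right if_distrib[of "\<lambda>x. F _ _ * x"] cong: if_cong)

lemma su_generators_hermitian: "su_generators m lam \<Longrightarrow> s < m^2-1 \<Longrightarrow> hermitian_mat m (lam s)"
  unfolding su_generators_def by blast

lemma su_generators_traceless:
  assumes "su_generators m lam" "s < m^2-1"
  shows "tr_prod m (1\<^sub>m m) (lam s) = 0"
proof -
  have "tr_prod m (1\<^sub>m m) (lam s) = mtrace (lam s)"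
    unfolding tr_prod_one_left mtrace_def
    using hermitian_mat_carrier[OF su_generators_hermitian[OF assms]] by simp
  then show ?thesis using assms unfolding su_generators_def by simp
qed

lemma su_generators_orth:
  assumes "su_generators m lam" "s < m^2-1" "t < m^2-1"
  shows "tr_prod m (lam s) (lam t) = (if s = t then 2 else 0)"
proof -
  have "mtrace (lam s * lam t) = tr_prod m (lam s) (lam t)"
    using assms by (intro mtrace_mult hermitian_mat_carrier su_generators_hermitian)
  then show ?thesis using assms unfolding su_generators_def by simp
qed

text \<open>Index \<open>0\<close> stands for the identity, matching the column \<open>x\<close> of the left-correlation matrix.\<close>

definition ext_gen :: "nat \<Rightarrow> (nat \<Rightarrow> complex mat) \<Rightarrow> nat \<Rightarrow> complex mat" where
  "ext_gen n lam j = (if j = 0 then 1\<^sub>m n else lam (j - 1))"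

lemma hermitian_ext_gen: "su_generators n lam \<Longrightarrow> j < 1 + (n^2-1) \<Longrightarrow> hermitian_mat n (ext_gen n lam j)"
  unfolding ext_gen_def using hermitian_mat_one su_generators_hermitian by auto

lemma tr_prod_ext_gen:
  assumes su: "su_generators n lam" and j: "j < 1 + (n^2-1)" "j' < 1 + (n^2-1)"
  shows "tr_prod n (ext_gen n lam j) (ext_gen n lam j') = (if j = j' then (if j = 0 then of_nat n else 2) else 0)"
proof (cases "j = 0"; cases "j' = 0")
  assume "j = 0" "j' = 0"
  then show ?thesis by (simp add: ext_gen_def tr_prod_one_left)
next
  assume "j = 0" "j' \<noteq> 0"
  then show ?thesis using su_generators_traceless[OF su, of "j' - 1"] j by (simp add: ext_gen_def)
next
  assume "j \<noteq> 0" "j' = 0"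
  then show ?thesis
    using su_generators_traceless[OF su, of "j - 1"] j tr_prod_commute[of n "1\<^sub>m n"]
    by (simp add: ext_gen_def)
next
  assume "j \<noteq> 0" "j' \<noteq> 0"
  then show ?thesis using su_generators_orth[OF su, of "j - 1" "j' - 1"] j by (auto simp: ext_gen_def)
qed

text \<open>The \<open>m\<^sup>2\<close> matrices \<open>ext_gen m lam \<alpha>\<close> are orthogonal, so for their (rescaled) coefficient
  matrices below \<open>f g = 1\<close>; the completeness relation is \<open>g f = 1\<close> read entrywise.\<close>

lemma su_generators_complete:
  assumes su: "su_generators m lam" and m: "m \<ge> 1" and abcd: "a<m" "b<m" "c<m" "d<m"
  shows "(\<Sum>s<m^2-1. lam s $$ (b,a) * lam s $$ (c,d)) =
     (if a = c \<and> b = d then 2 else 0) - (if a = b \<and> c = d then 2 / of_nat m else 0)"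
proof -
  define M where "M = 1 + (m^2 - 1)"
  have M: "M = m * m" using m unfolding M_def power2_eq_square by (simp add: Suc_le_eq)
  define w :: "nat \<Rightarrow> complex" where "w \<alpha> = (if \<alpha> = 0 then of_nat m else 2)" for \<alpha>
  define f where "f \<alpha> p = ext_gen m lam \<alpha> $$ (p div m, p mod m) / w \<alpha>" for \<alpha> p
  define g where "g p \<beta> = cnj (ext_gen m lam \<beta> $$ (p div m, p mod m))" for p \<beta>
  have dm: "(x*m+y) div m = x" "(x*m+y) mod m = y" if "y < m" for x y using that by auto
  have "(\<Sum>p<M. f \<alpha> p * g p \<beta>) = (if \<alpha> = \<beta> then 1 else 0)" if "\<alpha> < M" "\<beta> < M" for \<alpha> \<beta>
  proof -
    have "(\<Sum>p<M. f \<alpha> p * g p \<beta>) = tr_prod m (ext_gen m lam \<alpha>) (ext_gen m lam \<beta>) / w \<alpha>"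
      unfolding M sum_lessThan_mult sum_divide_distrib f_def g_def tr_prod_def
      using hermitian_mat_cnj[OF hermitian_ext_gen[OF su that(2)[unfolded M_def]]]
      by (intro sum.cong refl) (simp add: dm)
    then show ?thesis using tr_prod_ext_gen[OF su that[unfolded M_def]] m by (simp add: w_def)
  qed
  note inverse = sum_right_inverse_imp_left_inverse[OF this, of "a*m+b" "c*m+d"]
  define S where "S = (\<Sum>s<m^2-1. lam s $$ (b,a) * lam s $$ (c,d))"
  have "(a*m+b = c*m+d) \<longleftrightarrow> (a = c \<and> b = d)"
    using dm[OF abcd(2), of a] dm[OF abcd(4), of c] by metis
  then have "(\<Sum>\<alpha><M. g (a*m+b) \<alpha> * f \<alpha> (c*m+d)) = of_bool (a = c \<and> b = d)"
    using inverse abcd mult_add_less[of _ m _ m] unfolding M by simp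
  moreover have "(\<Sum>\<alpha><M. g (a*m+b) \<alpha> * f \<alpha> (c*m+d)) = of_bool (a = b \<and> c = d) / of_nat m + S / 2"
    unfolding M_def Suc_eq_plus1_left[symmetric] sum.lessThan_Suc_shift S_def
    using abcd hermitian_mat_cnj[OF su_generators_hermitian[OF su], of _ a b]
    by (simp add: f_def g_def w_def ext_gen_def dm sum_divide_distrib)
  ultimately have "S = 2 * of_bool (a = c \<and> b = d) - 2 / of_nat m * of_bool (a = b \<and> c = d)"
    by (simp add: field_simps)
  then show ?thesis unfolding S_def by simp
qed

lemma su_generators_fierz:
  assumes su: "su_generators m lam" and m: "m \<ge> 1"
  shows "(\<Sum>s<m^2-1. tr_prod m (lam s) X * tr_prod m (lam s) Y) =
     2 * tr_prod m X Y - 2 / of_nat m * (\<Sum>a<m. X $$ (a,a)) * (\<Sum>c<m. Y $$ (c,c))"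
proof -
  define N where "N = m^2 - 1"
  define L where "L s a b = lam s $$ (a,b)" for s a b
  have tX: "tr_prod m (lam s) X = (\<Sum>a<m. \<Sum>b<m. X $$ (a,b) * L s b a)" for s
    unfolding L_def by (subst tr_prod_commute) (simp add: tr_prod_def)
  have tY: "tr_prod m (lam s) Y = (\<Sum>c<m. \<Sum>d<m. L s c d * Y $$ (d,c))" for s
    unfolding L_def tr_prod_def ..
  have "(\<Sum>s<N. tr_prod m (lam s) X * tr_prod m (lam s) Y)
     = (\<Sum>s<N. \<Sum>a<m. \<Sum>b<m. \<Sum>c<m. \<Sum>d<m. (X $$ (a,b) * Y $$ (d,c)) * (L s b a * L s c d))"
    by (unfold tX tY sum_distrib_right, unfold sum_distrib_left) (simp add: ac_simps)
  also have "\<dots> = (\<Sum>a<m. \<Sum>b<m. \<Sum>c<m. \<Sum>d<m. (X $$ (a,b) * Y $$ (d,c)) * (\<Sum>s<N. L s b a * L s c d))"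
    unfolding sum_distrib_left
    by (subst sum.swap, rule sum.cong[OF refl], subst sum.swap, rule sum.cong[OF refl],
        subst sum.swap, rule sum.cong[OF refl], subst sum.swap, rule refl)
  also have "\<dots> = (\<Sum>a<m. \<Sum>b<m. \<Sum>c<m. \<Sum>d<m. (X $$ (a,b) * Y $$ (d,c)) *
       ((if a = c \<and> b = d then 2 else 0) - (if a = b \<and> c = d then 2 / of_nat m else 0)))"
    unfolding L_def N_def by (intro sum.cong refl) (subst su_generators_complete[OF su m], simp_all)
  also have "\<dots> = (\<Sum>a<m. \<Sum>b<m. X $$ (a,b) * Y $$ (b,a) * 2 -
        (if a = b then (\<Sum>c<m. X $$ (a,b) * Y $$ (c,c)) * (2 / of_nat m) else 0))"
    by (intro sum.cong refl)
      (simp add: right_diff_distrib sum_subtractf sum_sum_mult_delta sum_sum_mult_delta_diag)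
  also have "\<dots> = 2 * tr_prod m X Y - 2 / of_nat m * (\<Sum>a<m. X $$ (a,a)) * (\<Sum>c<m. Y $$ (c,c))"
    unfolding tr_prod_def
    by (simp add: sum_subtractf sum_distrib_left sum_distrib_right sum_divide_distrib ac_simps)
  finally show ?thesis unfolding N_def .
qed

definition bloch :: "nat \<Rightarrow> (nat \<Rightarrow> complex mat) \<Rightarrow> complex vec \<Rightarrow> nat \<Rightarrow> real" where
  "bloch m lam v s = Re (tr_prod m (lam s) (outer v v))"

lemma Im_tr_prod_outer:
  "su_generators m lam \<Longrightarrow> s < m^2-1 \<Longrightarrow> v \<in> carrier_vec m \<Longrightarrow> Im (tr_prod m (lam s) (outer v v)) = 0"
  by (intro Im_tr_prod_hermitian su_generators_hermitian hermitian_mat_outer)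

lemma tr_prod_outer_orthonormal:
  assumes onb: "orthonormal_basis m e" and kl: "k < m" "l < m"
  shows "tr_prod m (outer (e k) (e k)) (outer (e l) (e l)) = (if k = l then 1 else 0)"
proof -
  have "tr_prod m (outer (e k) (e k)) (outer (e l) (e l)) =
      (\<Sum>a<m. \<Sum>b<m. cnj (cnj (e k $ a) * e l $ a) * (cnj (e k $ b) * e l $ b))"
    unfolding tr_prod_def using orthonormal_basis_dim[OF onb] kl
    by (intro sum.cong refl) (simp add: outer_index ac_simps)
  also have "\<dots> = cnj (\<Sum>a<m. cnj (e k $ a) * e l $ a) * (\<Sum>b<m. cnj (e k $ b) * e l $ b)"
    unfolding cnj_sum sum_product ..
  finally show ?thesis using orthonormal_basis_orth[OF onb kl] by simp
qed

lemma trace_outer_orthonormal: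
  assumes onb: "orthonormal_basis m e" and k: "k < m"
  shows "(\<Sum>a<m. outer (e k) (e k) $$ (a,a)) = 1"
proof -
  have "(\<Sum>a<m. outer (e k) (e k) $$ (a,a)) = cnj (\<Sum>a<m. cnj (e k $ a) * e k $ a)"
    using orthonormal_basis_dim[OF onb k] by (simp add: outer_index cnj_sum mult.commute)
  then show ?thesis using orthonormal_basis_orth[OF onb k k] by simp
qed

lemma bloch_gram:
  assumes su: "su_generators m lam" and m: "m \<ge> 1" and onb: "orthonormal_basis m e"
    and kl: "k < m" "l < m"
  shows "(\<Sum>s<m^2-1. bloch m lam (e k) s * bloch m lam (e l) s) = (if k = l then 2 else 0) - 2 / real m"
proof -
  let ?x = "\<lambda>k s. tr_prod m (lam s) (outer (e k) (e k))"
  have "(\<Sum>s<m^2-1. bloch m lam (e k) s * bloch m lam (e l) s) = Re (\<Sum>s<m^2-1. ?x k s * ?x l s)"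
    unfolding bloch_def Re_sum
    using Im_tr_prod_outer[OF su _ orthonormal_basis_carrier[OF onb]] kl by (intro sum.cong refl) simp
  also have "(\<Sum>s<m^2-1. ?x k s * ?x l s) = (if k = l then 2 else 0) - 2 / of_nat m"
    unfolding su_generators_fierz[OF su m] tr_prod_outer_orthonormal[OF onb kl]
      trace_outer_orthonormal[OF onb kl(1)] trace_outer_orthonormal[OF onb kl(2)] by simp
  finally show ?thesis by simp
qed

lemma bloch_sum_zero:
  assumes su: "su_generators m lam" and onb: "orthonormal_basis m e" and s: "s < m^2-1"
  shows "(\<Sum>k<m. bloch m lam (e k) s) = 0"
proof -
  have "(\<Sum>k<m. tr_prod m (lam s) (outer (e k) (e k))) =
      (\<Sum>k<m. \<Sum>a<m. \<Sum>b<m. lam s $$ (a,b) * (e k $ b * cnj (e k $ a)))"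
    unfolding tr_prod_def using orthonormal_basis_dim[OF onb]
    by (intro sum.cong refl) (simp add: outer_index)
  also have "\<dots> = (\<Sum>a<m. \<Sum>b<m. lam s $$ (a,b) * (\<Sum>k<m. e k $ b * cnj (e k $ a)))"
    unfolding sum_distrib_left by (subst sum.swap, rule sum.cong[OF refl], rule sum.swap)
  also have "\<dots> = (\<Sum>a<m. \<Sum>b<m. lam s $$ (a,b) * 1\<^sub>m m $$ (b,a))"
    by (intro sum.cong refl) (simp add: orthonormal_basis_complete[OF onb])
  also have "\<dots> = tr_prod m (1\<^sub>m m) (lam s)"
    by (subst tr_prod_commute) (simp add: tr_prod_def)
  finally show ?thesis
    unfolding bloch_def Re_sum[symmetric] su_generators_traceless[OF su s] by simp
qed

lemma rank_mat_sum_le: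
  fixes f g :: "nat \<Rightarrow> nat \<Rightarrow> 'a::field"
  shows "vec_space.rank N (mat N N' (\<lambda>(r,s). \<Sum>k<K. f k r * g k s)) \<le> K"
proof (induction K)
  case 0
  have zero: "mat N N' (\<lambda>(r,s). \<Sum>k<0. f k r * g k s) = (0\<^sub>m N N' :: 'a mat)" by (rule eq_matI) auto
  show ?case unfolding zero by (simp add: vec_space.rank_0I)
next
  case (Suc K)
  have "mat N N' (\<lambda>(r,s). \<Sum>k<Suc K. f k r * g k s) =
     mat N N' (\<lambda>(r,s). \<Sum>k<K. f k r * g k s) + mat N N' (\<lambda>(r,s). f K r * g K s)"
    by (rule eq_matI) auto
  moreover have "vec_space.rank N (mat N N' (\<lambda>(r,s). f K r * g K s)) \<le> 1"
    by (rule vec_space.rank_le_1_product_entries[where f="f K" and g="g K" and nc=N']) auto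
  moreover have "vec_space.rank N (mat N N' (\<lambda>(r,s). \<Sum>k<K. f k r * g k s) + mat N N' (\<lambda>(r,s). f K r * g K s))
     \<le> vec_space.rank N (mat N N' (\<lambda>(r,s). \<Sum>k<K. f k r * g k s)) + vec_space.rank N (mat N N' (\<lambda>(r,s). f K r * g K s))"
    by (rule vec_space.rank_subadditive) auto
  ultimately show ?case using Suc by simp
qed

lemma (in vec_space) card_le_rank_of_lin_indpt_in_span:
  assumes A: "A \<in> carrier_mat n nc" and U: "U \<subseteq> span (set (cols A))" and li: "lin_indpt U"
  shows "card U \<le> rank A"
proof -
  let ?W = "span (set (cols A))"
  have "set (cols A) \<subseteq> carrier_vec n" using A cols_dim by blast
  then have sub: "subspace class_ring ?W V" using span_is_subspace by simp
  have fd: "vectorspace.fin_dim class_ring (vs ?W)" using fin_dim_span_cols[OF A] .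
  have "submodule class_ring ?W V" using sub unfolding subspace_def by blast
  then have "\<not> module.lin_dep class_ring (vs ?W) U" using span_li_not_depend(2)[OF U] li by simp
  then show ?thesis
    unfolding rank_def using vectorspace.li_le_dim(2)[OF subspace_is_vs[OF sub] fd] U by simp
qed

text \<open>Vectors \<open>a\<^sub>0, \<dots>, a\<^sub>m\<^sub>-\<^sub>1\<close> in \<open>\<real>\<^sup>N\<close> with the Gram matrix of the vertices of a regular simplex.\<close>

locale simplex_gram =
  fixes m N :: nat and a :: "nat \<Rightarrow> nat \<Rightarrow> real"
  assumes gram: "\<And>k l. k < m \<Longrightarrow> l < m \<Longrightarrow> (\<Sum>r<N. a k r * a l r) = (if k = l then 2 else 0) - 2 / real m"
    and two_le_m: "2 \<le> m"
begin

lemma lincomb_eq_zero_imp_coeff_eq_zero: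
  assumes L: "L \<subseteq> {..<m-1}" and zero: "\<And>r. r < N \<Longrightarrow> (\<Sum>l\<in>L. c l * a l r) = 0"
    and j: "j \<in> L"
  shows "c j = 0"
proof -
  define S where "S = (\<Sum>l\<in>L. c l)"
  have finL: "finite L" using L finite_subset by blast
  have coeff: "c i = S / real m" if i: "i \<in> L" for i
  proof -
    have im: "i < m" using i L by auto
    have "0 = (\<Sum>r<N. a i r * (\<Sum>l\<in>L. c l * a l r))" using zero by simp
    also have "\<dots> = (\<Sum>l\<in>L. c l * (\<Sum>r<N. a i r * a l r))"
      unfolding sum_distrib_left by (subst sum.swap) (simp add: ac_simps)
    also have "\<dots> = (\<Sum>l\<in>L. (if i = l then 2 * c l else 0) - c l * (2 / real m))"
      using L im by (intro sum.cong refl) (auto simp: gram algebra_simps)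
    also have "\<dots> = 2 * c i - 2 / real m * S"
      using finL i unfolding sum_subtractf S_def sum_distrib_right[symmetric] by simp
    finally show ?thesis using two_le_m by (simp add: field_simps)
  qed
  have "(\<Sum>l\<in>L. c l) = (\<Sum>l\<in>L. S / real m)" using coeff by (intro sum.cong) simp_all
  then have "S = real (card L) * S / real m" by (simp add: S_def[symmetric])
  moreover have "card L < m"
    using card_mono[OF _ L] two_le_m by simp
  ultimately have "S = 0" using two_le_m by (auto simp: field_simps)
  then show ?thesis using coeff j by simp
qed

lemma inj_on_vec: "inj_on (\<lambda>l. vec N (a l)) {..<m-1}"
proof (rule inj_onI, rule ccontr)
  fix k l assume kl: "k \<in> {..<m-1}" "l \<in> {..<m-1}" "vec N (a k) = vec N (a l)" "k \<noteq> l"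
  have "a k r = a l r" if "r < N" for r
    using arg_cong[OF kl(3), of "\<lambda>v. v $ r"] that by simp
  then have "(\<Sum>r<N. a k r * a k r) = (\<Sum>r<N. a k r * a l r)" by (intro sum.cong) auto
  moreover have "k < m" "l < m" using kl(1,2) by auto
  ultimately show False using gram[of k k] gram[of k l] kl(4) by simp
qed

lemma lin_indpt_vecs:
  "\<not> module.lin_dep class_ring (module_vec TYPE(real) N) ((\<lambda>l. vec N (a l)) ` {..<m-1})"
proof
  interpret V: vec_space "TYPE(real)" N .
  assume "V.lin_dep ((\<lambda>l. vec N (a l)) ` {..<m-1})"
  then obtain A c v where A: "finite A" "A \<subseteq> (\<lambda>l. vec N (a l)) ` {..<m-1}" "V.lincomb c A = 0\<^sub>v N"
      "v \<in> A" "c v \<noteq> 0"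
    unfolding V.lin_dep_def by auto
  define L where "L = {l \<in> {..<m-1}. vec N (a l) \<in> A}"
  have AL: "A = (\<lambda>l. vec N (a l)) ` L" using A(2) unfolding L_def by auto
  have inj: "inj_on (\<lambda>l. vec N (a l)) L" using inj_on_vec by (rule inj_on_subset) (auto simp: L_def)
  have zero: "(\<Sum>l\<in>L. c (vec N (a l)) * a l r) = 0" if r: "r < N" for r
  proof -
    have "0 = V.lincomb c A $ r" using A(3) r by simp
    also have "\<dots> = (\<Sum>x\<in>A. c x * x $ r)" using A(2) by (intro V.lincomb_index[OF r]) auto
    also have "\<dots> = (\<Sum>l\<in>L. c (vec N (a l)) * vec N (a l) $ r)"
      unfolding AL by (rule sum.reindex[OF inj, unfolded comp_def])
    finally show ?thesis using r by simp
  qed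
  obtain j where "j \<in> L" "v = vec N (a j)" using A(4) AL by auto
  with lincomb_eq_zero_imp_coeff_eq_zero[OF _ zero] A(5) show False by (auto simp: L_def)
qed

end

locale centred_simplex = simplex_gram +
  assumes sum_zero: "\<And>r. r < N \<Longrightarrow> (\<Sum>k<m. a k r) = 0"
begin

definition proj :: "real mat" where
  "proj = mat N N (\<lambda>(r,s). (\<Sum>k<m. a k r * a k s) / 2)"

lemma proj_carrier: "proj \<in> carrier_mat N N"
  unfolding proj_def by simp

lemma proj_index: "r < N \<Longrightarrow> s < N \<Longrightarrow> proj $$ (r,s) = (\<Sum>k<m. a k r * a k s) / 2"
  unfolding proj_def by simp

lemma proj_fixes_index:
  assumes "l < m" "r < N"
  shows "(\<Sum>s<N. proj $$ (r,s) * a l s) = a l r"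
proof -
  have "(\<Sum>s<N. proj $$ (r,s) * a l s) = (\<Sum>s<N. \<Sum>k<m. a k r * (a k s * a l s) / 2)"
    using assms(2) by (intro sum.cong refl)
      (simp add: proj_index sum_distrib_right sum_distrib_left sum_divide_distrib ac_simps)
  also have "\<dots> = (\<Sum>k<m. a k r * (\<Sum>s<N. a k s * a l s) / 2)"
    by (subst sum.swap) (simp add: sum_distrib_left sum_divide_distrib)
  also have "\<dots> = (\<Sum>k<m. (if k = l then a k r else 0) - a k r / real m)"
    using assms by (intro sum.cong refl) (auto simp: gram field_simps)
  also have "\<dots> = a l r - (\<Sum>k<m. a k r) / real m"
    using assms by (simp add: sum_subtractf sum_divide_distrib)
  finally show ?thesis using sum_zero[OF assms(2)] by simp
qed

lemma proj_fixes: "l < m \<Longrightarrow> proj *\<^sub>v vec N (a l) = vec N (a l)"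
  using proj_carrier proj_fixes_index
  by (intro eq_vecI) (auto simp: scalar_prod_def atLeast0LessThan)

lemma transpose_proj: "proj\<^sup>T = proj"
  by (rule eq_matI) (auto simp: proj_def mult.commute)

lemma proj_idem: "proj * proj = proj"
proof (rule eq_matI)
  fix r t assume "r < dim_row proj" "t < dim_col proj"
  then have rt: "r < N" "t < N" using proj_carrier by auto
  have "(proj * proj) $$ (r,t) = (\<Sum>s<N. proj $$ (r,s) * proj $$ (s,t))"
    using rt proj_carrier by (simp add: scalar_prod_def atLeast0LessThan)
  also have "\<dots> = (\<Sum>s<N. \<Sum>l<m. proj $$ (r,s) * a l s * a l t / 2)"
    using rt by (intro sum.cong refl) (simp add: proj_index sum_distrib_left sum_divide_distrib ac_simps)
  also have "\<dots> = (\<Sum>l<m. (\<Sum>s<N. proj $$ (r,s) * a l s) * a l t / 2)"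
    by (subst sum.swap) (simp add: sum_distrib_right sum_divide_distrib)
  also have "\<dots> = (\<Sum>l<m. a l r * a l t / 2)"
    using rt by (intro sum.cong refl) (simp add: proj_fixes_index)
  also have "\<dots> = proj $$ (r,t)"
    using rt by (simp add: proj_index sum_divide_distrib)
  finally show "(proj * proj) $$ (r,t) = proj $$ (r,t)" .
qed (use proj_carrier in auto)

text \<open>Eliminating \<open>a\<^sub>m\<^sub>-\<^sub>1 = -\<Sum>\<^sub>k\<^sub><\<^sub>m\<^sub>-\<^sub>1 a\<^sub>k\<close> writes \<open>proj\<close> as a sum of \<open>m - 1\<close> rank-one matrices.\<close>

lemma rank_proj_le: "vec_space.rank N proj \<le> m - 1"
proof -
  have mm: "m = Suc (m-1)" using two_le_m by simp
  have "proj = mat N N (\<lambda>(r,s). \<Sum>k<m-1. (a k r / 2) * (a k s - a (m-1) s))"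
  proof (rule eq_matI)
    fix r s assume "r < dim_row (mat N N (\<lambda>(r,s). \<Sum>k<m-1. (a k r / 2) * (a k s - a (m-1) s)))"
      "s < dim_col (mat N N (\<lambda>(r,s). \<Sum>k<m-1. (a k r / 2) * (a k s - a (m-1) s)))"
    then have rs: "r < N" "s < N" by auto
    have last: "a (m-1) r = - (\<Sum>k<m-1. a k r)"
      using sum_zero[OF rs(1)] by (subst (asm) mm, subst (asm) sum.lessThan_Suc) simp
    have "(\<Sum>k<m. a k r * a k s) = (\<Sum>k<m-1. a k r * a k s) + a (m-1) r * a (m-1) s"
      by (subst mm, subst sum.lessThan_Suc) simp
    also have "\<dots> = (\<Sum>k<m-1. a k r * (a k s - a (m-1) s))"
      unfolding last by (simp add: right_diff_distrib sum_subtractf sum_distrib_right)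
    finally show "proj $$ (r,s) = mat N N (\<lambda>(r,s). \<Sum>k<m-1. (a k r / 2) * (a k s - a (m-1) s)) $$ (r,s)"
      using rs by (simp add: proj_index sum_divide_distrib)
  qed (use proj_carrier in auto)
  then show ?thesis
    using rank_mat_sum_le[where N=N and N'=N and K="m-1" and f="\<lambda>k r. a k r / 2"
        and g="\<lambda>k s. a k s - a (m-1) s"] by simp
qed

lemma rank_proj_ge: "m - 1 \<le> vec_space.rank N proj"
proof -
  interpret V: vec_space "TYPE(real)" N .
  have "(\<lambda>l. vec N (a l)) ` {..<m-1} \<subseteq> V.span (set (cols proj))"
  proof
    fix u assume "u \<in> (\<lambda>l. vec N (a l)) ` {..<m-1}"
    then obtain l where l: "l < m-1" "u = vec N (a l)" by auto
    then have "proj *\<^sub>v u = u" "u \<in> carrier_vec N" using proj_fixes by auto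
    then have "u \<in> V.col_space proj"
      unfolding V.col_space_eq[OF proj_carrier] using proj_carrier by auto
    then show "u \<in> V.span (set (cols proj))" unfolding V.col_space_def .
  qed
  from V.card_le_rank_of_lin_indpt_in_span[OF proj_carrier this lin_indpt_vecs]
  show ?thesis using card_image[OF inj_on_vec] by simp
qed

lemma orth_proj_rank_proj: "orth_proj_rank N (m-1) proj"
  unfolding orth_proj_rank_def
  using proj_carrier transpose_proj proj_idem rank_proj_le rank_proj_ge by simp

end

lemma sum_square_sub_projection_le:
  fixes P :: "nat \<Rightarrow> nat \<Rightarrow> real" and v :: "nat \<Rightarrow> real"
  assumes sym: "\<And>r s. r<N \<Longrightarrow> s<N \<Longrightarrow> P r s = P s r"
    and idem: "\<And>s t. s<N \<Longrightarrow> t<N \<Longrightarrow> (\<Sum>r<N. P s r * P r t) = P s t"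
  shows "(\<Sum>r<N. (v r - (\<Sum>s<N. P r s * v s))\<^sup>2) \<le> (\<Sum>r<N. (v r)\<^sup>2)"
proof -
  define w where "w r = (\<Sum>s<N. P r s * v s)" for r
  have "(\<Sum>r<N. (w r)\<^sup>2) = (\<Sum>r<N. \<Sum>s<N. \<Sum>t<N. v s * v t * (P s r * P r t))"
    unfolding w_def power2_eq_square sum_product using sym by (intro sum.cong refl) (simp add: ac_simps)
  also have "\<dots> = (\<Sum>s<N. \<Sum>t<N. \<Sum>r<N. v s * v t * (P s r * P r t))"
    by (subst sum.swap, rule sum.cong[OF refl], rule sum.swap)
  also have "\<dots> = (\<Sum>s<N. \<Sum>t<N. v s * v t * P s t)"
    by (intro sum.cong refl) (simp add: idem flip: sum_distrib_left)
  also have "\<dots> = (\<Sum>r<N. v r * w r)"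
    unfolding w_def sum_distrib_left by (simp add: ac_simps)
  finally have ww: "(\<Sum>r<N. (w r)\<^sup>2) = (\<Sum>r<N. v r * w r)" .
  have "(\<Sum>r<N. (v r - w r)\<^sup>2) = (\<Sum>r<N. (v r)\<^sup>2) - 2 * (\<Sum>r<N. v r * w r) + (\<Sum>r<N. (w r)\<^sup>2)"
    by (simp add: power2_diff sum.distrib sum_subtractf sum_distrib_left mult.assoc)
  also have "\<dots> = (\<Sum>r<N. (v r)\<^sup>2) - (\<Sum>r<N. (w r)\<^sup>2)" using ww by simp
  also have "\<dots> \<le> (\<Sum>r<N. (v r)\<^sup>2)" by (simp add: sum_nonneg)
  finally show ?thesis unfolding w_def .
qed

lemma frob_sq_sub_proj_le:
  fixes P X :: "real mat"
  assumes P: "P \<in> carrier_mat N N" "P\<^sup>T = P" "P * P = P" and X: "X \<in> carrier_mat N K"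
  shows "frob_sq (X - P * X) \<le> frob_sq X"
proof -
  have sym: "P $$ (r,s) = P $$ (s,r)" if "r < N" "s < N" for r s
    using arg_cong[OF P(2), of "\<lambda>A. A $$ (s,r)"] that P(1) by simp
  have idem: "(\<Sum>s<N. P $$ (r,s) * P $$ (s,t)) = P $$ (r,t)" if "r < N" "t < N" for r t
    using arg_cong[OF P(3), of "\<lambda>A. A $$ (r,t)"] that P(1) by (simp add: scalar_prod_def atLeast0LessThan)
  have "frob_sq (X - P * X) = (\<Sum>c<K. \<Sum>r<N. (X $$ (r,c) - (\<Sum>s<N. P $$ (r,s) * X $$ (s,c)))\<^sup>2)"
    unfolding frob_sq_def using carrier_matD[OF P(1)] carrier_matD[OF X]
    by (subst sum.swap) (intro sum.cong refl, simp_all add: scalar_prod_def atLeast0LessThan)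
  also have "\<dots> \<le> (\<Sum>c<K. \<Sum>r<N. (X $$ (r,c))\<^sup>2)"
    using sym idem by (intro sum_mono sum_square_sub_projection_le) auto
  also have "\<dots> = frob_sq X"
    unfolding frob_sq_def using carrier_matD[OF X] by (subst sum.swap) simp
  finally show ?thesis .
qed

lemma frob_sq_proj_residual_le:
  fixes P T S :: "real mat"
  assumes P: "P \<in> carrier_mat N N" "P\<^sup>T = P" "P * P = P"
    and T: "T \<in> carrier_mat N K" and S: "S \<in> carrier_mat N K" and PS: "P * S = S"
  shows "frob_sq (T - P * T) \<le> frob_sq (T - S)"
proof -
  have "P * (T - S) = P * T - S" using mult_minus_distrib_mat[OF P(1) T S] PS by simp
  then have "T - P * T = (T - S) - P * (T - S)" using P(1) T S by (intro eq_matI) auto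
  moreover have "T - S \<in> carrier_mat N K" using S by (rule minus_carrier_mat)
  ultimately show ?thesis using frob_sq_sub_proj_le[OF P] by metis
qed

lemma sum_orthogonal_family_norm:
  fixes g :: "'b \<Rightarrow> 'e \<Rightarrow> complex" and c :: "'b \<Rightarrow> real"
  assumes "finite I"
    and orth: "\<And>\<alpha> \<beta>. \<alpha>\<in>I \<Longrightarrow> \<beta>\<in>I \<Longrightarrow> (\<Sum>e\<in>E. g \<alpha> e * cnj (g \<beta> e)) = (if \<alpha> = \<beta> then of_real (c \<alpha>) else 0)"
  shows "(\<Sum>e\<in>E. (\<Sum>\<alpha>\<in>I. w \<alpha> * g \<alpha> e) * cnj (\<Sum>\<beta>\<in>I. w \<beta> * g \<beta> e)) = (\<Sum>\<alpha>\<in>I. w \<alpha> * cnj (w \<alpha>) * of_real (c \<alpha>))"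
proof -
  have "(\<Sum>e\<in>E. (\<Sum>\<alpha>\<in>I. w \<alpha> * g \<alpha> e) * cnj (\<Sum>\<beta>\<in>I. w \<beta> * g \<beta> e)) =
      (\<Sum>e\<in>E. \<Sum>\<alpha>\<in>I. \<Sum>\<beta>\<in>I. w \<alpha> * cnj (w \<beta>) * (g \<alpha> e * cnj (g \<beta> e)))"
    unfolding cnj_sum by (unfold sum_distrib_right, unfold sum_distrib_left, simp add: ac_simps)
  also have "\<dots> = (\<Sum>\<alpha>\<in>I. \<Sum>\<beta>\<in>I. w \<alpha> * cnj (w \<beta>) * (\<Sum>e\<in>E. g \<alpha> e * cnj (g \<beta> e)))"
    unfolding sum_distrib_left by (subst sum.swap, rule sum.cong[OF refl], rule sum.swap)
  also have "\<dots> = (\<Sum>\<alpha>\<in>I. \<Sum>\<beta>\<in>I. if \<alpha> = \<beta> then w \<alpha> * cnj (w \<alpha>) * of_real (c \<alpha>) else 0)"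
    by (intro sum.cong refl) (simp add: orth)
  also have "\<dots> = (\<Sum>\<alpha>\<in>I. w \<alpha> * cnj (w \<alpha>) * of_real (c \<alpha>))"
    using assms(1) by simp
  finally show ?thesis .
qed

text \<open>With \<open>s\<close> the orthogonal projection of \<open>f\<close> onto the span of the \<open>g \<alpha>\<close>, the claim is
  \<open>0 \<le> \<parallel>f - s\<parallel>\<^sup>2 = \<parallel>f\<parallel>\<^sup>2 - \<parallel>s\<parallel>\<^sup>2\<close>.\<close>

lemma bessel_inequality:
  fixes f :: "'e \<Rightarrow> complex" and g :: "'b \<Rightarrow> 'e \<Rightarrow> complex" and c :: "'b \<Rightarrow> real"
  assumes fin: "finite E" "finite I" and cpos: "\<And>\<alpha>. \<alpha>\<in>I \<Longrightarrow> c \<alpha> > 0"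
    and orth: "\<And>\<alpha> \<beta>. \<alpha>\<in>I \<Longrightarrow> \<beta>\<in>I \<Longrightarrow> (\<Sum>e\<in>E. g \<alpha> e * cnj (g \<beta> e)) = (if \<alpha> = \<beta> then of_real (c \<alpha>) else 0)"
  shows "(\<Sum>\<alpha>\<in>I. (cmod (\<Sum>e\<in>E. f e * cnj (g \<alpha> e)))\<^sup>2 / c \<alpha>) \<le> (\<Sum>e\<in>E. (cmod (f e))\<^sup>2)"
proof -
  define F where "F \<alpha> = (\<Sum>e\<in>E. f e * cnj (g \<alpha> e))" for \<alpha>
  define w where "w \<alpha> = F \<alpha> / of_real (c \<alpha>)" for \<alpha>
  define s where "s e = (\<Sum>\<alpha>\<in>I. w \<alpha> * g \<alpha> e)" for e
  define B where "B = (\<Sum>\<alpha>\<in>I. (cmod (F \<alpha>))\<^sup>2 / c \<alpha>)"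
  have fs: "(\<Sum>e\<in>E. f e * cnj (s e)) = of_real B"
  proof -
    have "(\<Sum>e\<in>E. f e * cnj (s e)) = (\<Sum>\<alpha>\<in>I. cnj (w \<alpha>) * F \<alpha>)"
      unfolding s_def F_def cnj_sum sum_distrib_left by (subst sum.swap) (simp add: ac_simps)
    then show ?thesis unfolding B_def w_def of_real_sum
      by (simp add: ac_simps complex_mult_cnj cmod_power2 flip: of_real_power)
  qed
  have "(\<Sum>e\<in>E. s e * cnj (s e)) = (\<Sum>\<alpha>\<in>I. w \<alpha> * cnj (w \<alpha>) * of_real (c \<alpha>))"
    unfolding s_def by (rule sum_orthogonal_family_norm[OF fin(2) orth])
  also have "\<dots> = of_real B"
    unfolding B_def of_real_sum
  proof (intro sum.cong refl)
    fix \<alpha> assume "\<alpha> \<in> I"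
    then have "complex_of_real (c \<alpha>) \<noteq> 0" using cpos[of \<alpha>] by simp
    then show "w \<alpha> * cnj (w \<alpha>) * of_real (c \<alpha>) = of_real ((cmod (F \<alpha>))\<^sup>2 / c \<alpha>)"
      unfolding w_def of_real_divide complex_norm_square by (simp add: field_simps)
  qed
  finally have "(\<Sum>e\<in>E. s e * cnj (s e)) = of_real B" .
  moreover have "(\<Sum>e\<in>E. s e * cnj (f e)) = of_real B"
    using arg_cong[OF fs, of cnj] by (simp add: cnj_sum mult.commute)
  moreover have "(\<Sum>e\<in>E. (f e - s e) * cnj (f e - s e)) =
      (\<Sum>e\<in>E. f e * cnj (f e)) - (\<Sum>e\<in>E. f e * cnj (s e)) - (\<Sum>e\<in>E. s e * cnj (f e)) + (\<Sum>e\<in>E. s e * cnj (s e))"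
    by (simp add: ring_distribs sum.distrib sum_subtractf)
  moreover have norm: "(\<Sum>e\<in>E. h e * cnj (h e)) = of_real (\<Sum>e\<in>E. (cmod (h e))\<^sup>2)" for h
    unfolding of_real_sum complex_norm_square ..
  ultimately have "of_real (\<Sum>e\<in>E. (cmod (f e - s e))\<^sup>2) = complex_of_real ((\<Sum>e\<in>E. (cmod (f e))\<^sup>2) - B)"
    using fs norm[of f] norm[of "\<lambda>e. f e - s e"] by simp
  then have "(\<Sum>e\<in>E. (cmod (f e - s e))\<^sup>2) = (\<Sum>e\<in>E. (cmod (f e))\<^sup>2) - B"
    using of_real_eq_iff by blast
  moreover have "(\<Sum>e\<in>E. (cmod (f e - s e))\<^sup>2) \<ge> 0" by (simp add: sum_nonneg)
  ultimately show ?thesis unfolding B_def F_def by linarith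
qed

lemma hilbert_schmidt_bessel:
  fixes G :: "'b \<Rightarrow> complex mat" and c :: "'b \<Rightarrow> real"
  assumes I: "finite I" and herm: "\<And>\<alpha>. \<alpha> \<in> I \<Longrightarrow> hermitian_mat d (G \<alpha>)"
    and orth: "\<And>\<alpha> \<beta>. \<alpha> \<in> I \<Longrightarrow> \<beta> \<in> I \<Longrightarrow> tr_prod d (G \<alpha>) (G \<beta>) = (if \<alpha> = \<beta> then of_real (c \<alpha>) else 0)"
    and cpos: "\<And>\<alpha>. \<alpha> \<in> I \<Longrightarrow> c \<alpha> > 0" and \<Delta>: "hermitian_mat d \<Delta>"
  shows "(\<Sum>\<alpha>\<in>I. (cmod (tr_prod d (G \<alpha>) \<Delta>))\<^sup>2 / c \<alpha>) \<le> Re (tr_prod d \<Delta> \<Delta>)"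
proof -
  let ?E = "{..<d} \<times> {..<d}"
  have sum_E: "(\<Sum>x\<in>?E. h x) = (\<Sum>p<d. \<Sum>q<d. h (p,q))" for h :: "nat \<times> nat \<Rightarrow> 'z::comm_monoid_add"
    by (simp add: sum.cartesian_product)
  have inner: "(\<Sum>x\<in>?E. A $$ x * cnj (G \<alpha> $$ x)) = tr_prod d A (G \<alpha>)" if "\<alpha> \<in> I" for A \<alpha>
    unfolding sum_E tr_prod_def using hermitian_mat_cnj[OF herm[OF that]] by (intro sum.cong refl) simp
  have "(\<Sum>\<alpha>\<in>I. (cmod (\<Sum>x\<in>?E. \<Delta> $$ x * cnj (G \<alpha> $$ x)))\<^sup>2 / c \<alpha>) \<le> (\<Sum>x\<in>?E. (cmod (\<Delta> $$ x))\<^sup>2)"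
    using I cpos by (intro bessel_inequality) (simp_all add: inner orth)
  moreover have "(\<Sum>x\<in>?E. (cmod (\<Delta> $$ x))\<^sup>2) = Re (tr_prod d \<Delta> \<Delta>)"
    unfolding tr_prod_self_hermitian[OF \<Delta>] sum_E by simp
  moreover have "(\<Sum>x\<in>?E. \<Delta> $$ x * cnj (G \<alpha> $$ x)) = tr_prod d (G \<alpha>) \<Delta>" if "\<alpha> \<in> I" for \<alpha>
    using inner[OF that] tr_prod_commute by metis
  ultimately show ?thesis by simp
qed

definition corr_op :: "nat \<Rightarrow> (nat \<Rightarrow> complex mat) \<Rightarrow> (nat \<Rightarrow> complex mat) \<Rightarrow> nat \<Rightarrow> nat \<Rightarrow> complex mat" where
  "corr_op n lamA lamB i j = kron (lamA i) (ext_gen n lamB j)"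

definition left_corr_scale :: "nat \<Rightarrow> nat \<Rightarrow> nat \<Rightarrow> real" where
  "left_corr_scale m n j = sqrt (2 / (real m ^ 2 * real n)) *
     (if j = 0 then real m / 2 else sqrt (2 / real n) * (real (m*n) / 4))"

lemma left_corr_scale_sq:
  "m \<ge> 1 \<Longrightarrow> n \<ge> 1 \<Longrightarrow> (left_corr_scale m n j)\<^sup>2 = 1 / (if j = 0 then 2 * real n else 4)"
  unfolding left_corr_scale_def
  by (cases "j = 0") (auto simp: power_mult_distrib real_sqrt_mult field_simps power2_eq_square)

context
  fixes m n :: nat and lamA lamB :: "nat \<Rightarrow> complex mat"
  assumes suA: "su_generators m lamA" and suB: "su_generators n lamB"
begin

lemma hermitian_corr_op:
  "i < m^2-1 \<Longrightarrow> j < 1 + (n^2-1) \<Longrightarrow> hermitian_mat (m*n) (corr_op n lamA lamB i j)"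
  unfolding corr_op_def by (intro hermitian_mat_kron su_generators_hermitian[OF suA] hermitian_ext_gen[OF suB])

lemma tr_prod_corr_op:
  assumes "i < m^2-1" "j < 1 + (n^2-1)" "i' < m^2-1" "j' < 1 + (n^2-1)"
  shows "tr_prod (m*n) (corr_op n lamA lamB i j) (corr_op n lamA lamB i' j') =
     (if (i,j) = (i',j') then (if j = 0 then 2 * of_nat n else 4) else 0)"
  unfolding corr_op_def
  using assms tr_prod_kron[OF hermitian_mat_carrier hermitian_mat_carrier hermitian_mat_carrier hermitian_mat_carrier,
      OF su_generators_hermitian[OF suA] su_generators_hermitian[OF suA] hermitian_ext_gen[OF suB] hermitian_ext_gen[OF suB]]
    su_generators_orth[OF suA] tr_prod_ext_gen[OF suB]
  by auto

lemma left_corr_index: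
  assumes X: "X \<in> carrier_mat (m*n) (m*n)" and ij: "i < m^2-1" "j < 1 + (n^2-1)"
  shows "left_corr m n lamA lamB X $$ (i,j) = left_corr_scale m n j * Re (tr_prod (m*n) (corr_op n lamA lamB i j) X)"
proof -
  have "mtrace (corr_op n lamA lamB i j * X) = tr_prod (m*n) (corr_op n lamA lamB i j) X"
    by (rule mtrace_mult[OF hermitian_mat_carrier[OF hermitian_corr_op[OF ij]] X])
  then show ?thesis using ij
    unfolding left_corr_def bloch_x_def corr_t_def left_corr_scale_def corr_op_def ext_gen_def
    by (cases "j = 0") auto
qed

lemma left_corr_carrier: "left_corr m n lamA lamB X \<in> carrier_mat (m^2-1) (1 + (n^2-1))"
  unfolding left_corr_def by simp

lemma left_corr_minus:
  assumes "X \<in> carrier_mat (m*n) (m*n)" "Y \<in> carrier_mat (m*n) (m*n)"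
  shows "left_corr m n lamA lamB (X - Y) = left_corr m n lamA lamB X - left_corr m n lamA lamB Y"
proof (rule eq_matI)
  fix i j
  assume "i < dim_row (left_corr m n lamA lamB X - left_corr m n lamA lamB Y)"
    "j < dim_col (left_corr m n lamA lamB X - left_corr m n lamA lamB Y)"
  then have ij: "i < m^2-1" "j < 1 + (n^2-1)" by (simp_all add: left_corr_def)
  have "X - Y \<in> carrier_mat (m*n) (m*n)" using assms(2) by (rule minus_carrier_mat)
  then show "left_corr m n lamA lamB (X - Y) $$ (i,j) =
      (left_corr m n lamA lamB X - left_corr m n lamA lamB Y) $$ (i,j)"
    using ij assms carrier_matD[OF left_corr_carrier]
    by (simp add: left_corr_index tr_prod_minus_right right_diff_distrib)
qed (simp_all add: left_corr_def)

text \<open>The entries of \<open>\<T>(\<Delta>)\<close> are scaled coefficients of \<open>\<Delta>\<close> in the orthogonal family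
  \<open>\<lambda>\<^sub>i \<otimes> 1, \<lambda>\<^sub>i \<otimes> \<lambda>\<^sub>j\<close>, and the scaling never exceeds the normalisation.\<close>

lemma frob_sq_left_corr_le:
  assumes m: "m \<ge> 1" and n: "n \<ge> 1" and \<Delta>: "hermitian_mat (m*n) \<Delta>"
  shows "frob_sq (left_corr m n lamA lamB \<Delta>) \<le> Re (mtrace (\<Delta> * \<Delta>))"
proof -
  define c where "c j = (if j = 0 then 2 * real n else 4)" for j :: nat
  define t where "t i j = tr_prod (m*n) (corr_op n lamA lamB i j) \<Delta>" for i j
  have \<Delta>c: "\<Delta> \<in> carrier_mat (m*n) (m*n)" using hermitian_mat_carrier[OF \<Delta>] .
  have "frob_sq (left_corr m n lamA lamB \<Delta>) = (\<Sum>i<m^2-1. \<Sum>j<1+(n^2-1). (left_corr_scale m n j * Re (t i j))\<^sup>2)"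
    unfolding frob_sq_def t_def using carrier_matD[OF left_corr_carrier]
    by (simp add: left_corr_index[OF \<Delta>c])
  also have "\<dots> \<le> (\<Sum>i<m^2-1. \<Sum>j<1+(n^2-1). (cmod (t i j))\<^sup>2 / c j)"
  proof (intro sum_mono)
    fix i j
    have "(Re (t i j))\<^sup>2 \<le> (cmod (t i j))\<^sup>2" by (simp add: abs_Re_le_cmod power_mono flip: abs_le_square_iff)
    then show "(left_corr_scale m n j * Re (t i j))\<^sup>2 \<le> (cmod (t i j))\<^sup>2 / c j"
      using left_corr_scale_sq[OF m n, of j] by (simp add: power_mult_distrib c_def divide_right_mono)
  qed
  also have "\<dots> = (\<Sum>\<alpha>\<in>{..<m^2-1} \<times> {..<1+(n^2-1)}.
      (cmod (tr_prod (m*n) (case_prod (corr_op n lamA lamB) \<alpha>) \<Delta>))\<^sup>2 / c (snd \<alpha>))"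
    unfolding t_def sum.cartesian_product by (intro sum.cong refl) (simp add: case_prod_unfold)
  also have "\<dots> \<le> Re (tr_prod (m*n) \<Delta> \<Delta>)"
    using n by (intro hilbert_schmidt_bessel[OF _ _ _ _ \<Delta>])
      (auto simp: hermitian_corr_op tr_prod_corr_op c_def split: if_split_asm)
  also have "\<dots> = Re (mtrace (\<Delta> * \<Delta>))" using mtrace_mult[OF \<Delta>c \<Delta>c] by simp
  finally show ?thesis .
qed

end

lemma mult_mat_eq_of_fixes_cols:
  fixes P M :: "'a::comm_ring_1 mat"
  assumes P: "P \<in> carrier_mat N N" and M: "M \<in> carrier_mat N K"
    and cols: "\<And>s j. s < N \<Longrightarrow> j < K \<Longrightarrow> M $$ (s,j) = (\<Sum>k<m. a k s * w k j)"
    and fixed: "\<And>k. k < m \<Longrightarrow> P *\<^sub>v vec N (a k) = vec N (a k)"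
  shows "P * M = M"
proof (rule eq_matI)
  fix r j assume "r < dim_row M" "j < dim_col M"
  then have rj: "r < N" "j < K" using M by auto
  have fix_index: "(\<Sum>s<N. P $$ (r,s) * a k s) = a k r" if "k < m" for k
    using arg_cong[OF fixed[OF that], of "\<lambda>v. v $ r"] rj P by (simp add: scalar_prod_def atLeast0LessThan)
  have "(P * M) $$ (r,j) = (\<Sum>s<N. \<Sum>k<m. w k j * (P $$ (r,s) * a k s))"
    using rj P M cols by (simp add: scalar_prod_def atLeast0LessThan sum_distrib_left ac_simps)
  also have "\<dots> = (\<Sum>k<m. w k j * (\<Sum>s<N. P $$ (r,s) * a k s))"
    by (subst sum.swap) (simp add: sum_distrib_left)
  also have "\<dots> = (\<Sum>k<m. w k j * a k r)" by (simp add: fix_index)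
  also have "\<dots> = M $$ (r,j)" using rj by (simp add: cols mult.commute)
  finally show "(P * M) $$ (r,j) = M $$ (r,j)" .
qed (use P M in auto)

definition cq_state :: "nat \<Rightarrow> nat \<Rightarrow> (nat \<Rightarrow> complex vec) \<Rightarrow> (nat \<Rightarrow> real) \<Rightarrow> (nat \<Rightarrow> complex mat) \<Rightarrow> complex mat" where
  "cq_state m n e p \<rho>k = mat (m*n) (m*n) (\<lambda>(i,j). \<Sum>k<m. complex_of_real (p k) *
                                   kron (outer (e k) (e k)) (\<rho>k k) $$ (i,j))"

context
  fixes m n :: nat and e :: "nat \<Rightarrow> complex vec" and p :: "nat \<Rightarrow> real" and \<rho>k :: "nat \<Rightarrow> complex mat"
  assumes onb: "orthonormal_basis m e" and states: "\<And>k. k < m \<Longrightarrow> is_state n (\<rho>k k)"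
begin

lemma hermitian_cq_state: "hermitian_mat (m*n) (cq_state m n e p \<rho>k)"
proof (rule hermitian_matI)
  show "cq_state m n e p \<rho>k \<in> carrier_mat (m*n) (m*n)" unfolding cq_state_def by simp
  fix i j assume ij: "i < m*n" "j < m*n"
  have "hermitian_mat (m*n) (kron (outer (e k) (e k)) (\<rho>k k))" if "k < m" for k
    using that by (intro hermitian_mat_kron hermitian_mat_outer orthonormal_basis_carrier[OF onb]
        hermitian_state states)
  then have "(\<Sum>k<m. complex_of_real (p k) * cnj (kron (outer (e k) (e k)) (\<rho>k k) $$ (i,j))) =
      (\<Sum>k<m. complex_of_real (p k) * kron (outer (e k) (e k)) (\<rho>k k) $$ (j,i))"
    using ij hermitian_mat_cnj by (intro sum.cong refl) (metis lessThan_iff)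
  then show "cnj (cq_state m n e p \<rho>k $$ (i,j)) = cq_state m n e p \<rho>k $$ (j,i)"
    using ij unfolding cq_state_def by (simp add: cnj_sum)
qed

lemma tr_prod_kron_cq_state:
  assumes G: "G \<in> carrier_mat m m" and H: "H \<in> carrier_mat n n"
  shows "tr_prod (m*n) (kron G H) (cq_state m n e p \<rho>k) =
    (\<Sum>k<m. complex_of_real (p k) * (tr_prod m G (outer (e k) (e k)) * tr_prod n H (\<rho>k k)))"
proof -
  have "tr_prod (m*n) (kron G H) (cq_state m n e p \<rho>k) =
      (\<Sum>k<m. complex_of_real (p k) * tr_prod (m*n) (kron G H) (kron (outer (e k) (e k)) (\<rho>k k)))"
    unfolding tr_prod_def cq_state_def sum_distrib_left
    by (simp add: sum_distrib_left ac_simps, subst sum.swap, subst (2) sum.swap, rule refl)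
  also have "\<dots> = (\<Sum>k<m. complex_of_real (p k) * (tr_prod m G (outer (e k) (e k)) * tr_prod n H (\<rho>k k)))"
    using hermitian_mat_carrier[OF hermitian_state[OF states]] orthonormal_basis_carrier[OF onb]
    by (intro sum.cong refl) (simp add: tr_prod_kron[OF G outer_carrier H])
  finally show ?thesis .
qed

lemma left_corr_cq_state_index:
  assumes suA: "su_generators m lamA" and suB: "su_generators n lamB"
    and sj: "s < m^2-1" "j < 1 + (n^2-1)"
  shows "left_corr m n lamA lamB (cq_state m n e p \<rho>k) $$ (s,j) =
    (\<Sum>k<m. bloch m lamA (e k) s * (left_corr_scale m n j * p k * Re (tr_prod n (ext_gen n lamB j) (\<rho>k k))))"
proof -
  have "cq_state m n e p \<rho>k \<in> carrier_mat (m*n) (m*n)" unfolding cq_state_def by simp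
  then have "left_corr m n lamA lamB (cq_state m n e p \<rho>k) $$ (s,j) =
      left_corr_scale m n j * Re (tr_prod (m*n) (corr_op n lamA lamB s j) (cq_state m n e p \<rho>k))"
    by (rule left_corr_index[OF suA suB _ sj])
  also have "tr_prod (m*n) (corr_op n lamA lamB s j) (cq_state m n e p \<rho>k) =
      (\<Sum>k<m. complex_of_real (p k) *
        (tr_prod m (lamA s) (outer (e k) (e k)) * tr_prod n (ext_gen n lamB j) (\<rho>k k)))"
    unfolding corr_op_def
    by (intro tr_prod_kron_cq_state hermitian_mat_carrier su_generators_hermitian[OF suA sj(1)]
        hermitian_ext_gen[OF suB sj(2)])
  also have "left_corr_scale m n j * Re (\<Sum>k<m. complex_of_real (p k) *
        (tr_prod m (lamA s) (outer (e k) (e k)) * tr_prod n (ext_gen n lamB j) (\<rho>k k))) =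
      (\<Sum>k<m. bloch m lamA (e k) s *
      (left_corr_scale m n j * p k * Re (tr_prod n (ext_gen n lamB j) (\<rho>k k))))"
    unfolding Re_sum sum_distrib_left bloch_def
    using Im_tr_prod_outer[OF suA sj(1) orthonormal_basis_carrier[OF onb]]
    by (intro sum.cong refl) (simp add: ac_simps)
  finally show ?thesis .
qed

end

lemma left_corr_dist_le_hs_dist:
  assumes m: "m \<ge> 2" and n: "n \<ge> 2" and suA: "su_generators m lamA" and suB: "su_generators n lamB"
    and \<rho>: "is_state (m*n) \<rho>" and zd: "zero_discord m n \<chi>"
  shows "\<exists>P. orth_proj_rank (m^2-1) (m-1) P \<and>
    frob_sq (left_corr m n lamA lamB \<rho> - P * left_corr m n lamA lamB \<rho>) \<le> Re (mtrace ((\<rho> - \<chi>) * (\<rho> - \<chi>)))"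
proof -
  obtain e p \<rho>k where onb: "orthonormal_basis m e" and states: "\<And>k. k < m \<Longrightarrow> is_state n (\<rho>k k)"
    and \<chi>: "\<chi> = cq_state m n e p \<rho>k"
    \<comment> \<open>only the product form of \<open>\<chi>\<close> matters: \<open>p\<close> need not be a probability distribution\<close>
    using zd unfolding zero_discord_def cq_state_def by blast
  interpret simplex: centred_simplex m "m^2-1" "\<lambda>k. bloch m lamA (e k)"
    using bloch_gram[OF suA _ onb] bloch_sum_zero[OF suA onb] m by unfold_locales auto
  let ?T = "left_corr m n lamA lamB"
  have \<rho>h: "hermitian_mat (m*n) \<rho>" and \<chi>h: "hermitian_mat (m*n) \<chi>"
    using hermitian_state[OF \<rho>] hermitian_cq_state[OF onb states] \<chi> by auto
  have cols: "?T \<chi> $$ (s,j) = (\<Sum>k<m. bloch m lamA (e k) s *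
      (left_corr_scale m n j * p k * Re (tr_prod n (ext_gen n lamB j) (\<rho>k k))))"
    if "s < m^2-1" "j < 1 + (n^2-1)" for s j
    unfolding \<chi> by (rule left_corr_cq_state_index[OF onb states suA suB that])
  have "simplex.proj * ?T \<chi> = ?T \<chi>"
    by (rule mult_mat_eq_of_fixes_cols[OF simplex.proj_carrier left_corr_carrier[OF suA suB] cols
          simplex.proj_fixes])
  then have "frob_sq (?T \<rho> - simplex.proj * ?T \<rho>) \<le> frob_sq (?T \<rho> - ?T \<chi>)"
    using simplex.proj_carrier simplex.transpose_proj simplex.proj_idem left_corr_carrier[OF suA suB]
    by (intro frob_sq_proj_residual_le) auto
  also have "\<dots> = frob_sq (?T (\<rho> - \<chi>))"
    using left_corr_minus[OF suA suB hermitian_mat_carrier[OF \<rho>h] hermitian_mat_carrier[OF \<chi>h]] by simp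
  also have "\<dots> \<le> Re (mtrace ((\<rho> - \<chi>) * (\<rho> - \<chi>)))"
    using m n by (intro frob_sq_left_corr_le[OF suA suB] hermitian_mat_minus[OF \<rho>h \<chi>h]) auto
  finally show ?thesis using simplex.orth_proj_rank_proj by blast
qed

lemma is_state_outer:
  assumes v: "v \<in> carrier_vec n" and unit: "(\<Sum>i<n. cnj (v $ i) * v $ i) = 1"
  shows "is_state n (outer v v)"
proof -
  have A: "outer v v \<in> carrier_mat n n" by (rule outer_carrier[OF v])
  have "psd_mat n (outer v v)"
    unfolding psd_mat_def Let_def
  proof (intro conjI ballI A)
    fix w :: "complex vec" assume w: "w \<in> carrier_vec n"
    define z where "z = (\<Sum>j<n. cnj (v $ j) * w $ j)"
    have "(outer v v *\<^sub>v w) $ i = v $ i * z" if "i < n" for i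
      using that v w A unfolding z_def
      by (simp add: outer_def scalar_prod_def atLeast0LessThan sum_distrib_left ac_simps)
    then have "(\<Sum>i<n. cnj (w $ i) * (outer v v *\<^sub>v w) $ i) = cnj z * z"
      unfolding z_def by (simp add: cnj_sum sum_distrib_right ac_simps)
    also have "\<dots> = of_real ((cmod z)\<^sup>2)" by (metis complex_norm_square mult.commute)
    finally have q: "(\<Sum>i<n. cnj (w $ i) * (outer v v *\<^sub>v w) $ i) = of_real ((cmod z)\<^sup>2)" .
    show "Im (\<Sum>i<n. cnj (w $ i) * (outer v v *\<^sub>v w) $ i) = 0" unfolding q by simp
    show "0 \<le> Re (\<Sum>i<n. cnj (w $ i) * (outer v v *\<^sub>v w) $ i)" unfolding q by simp
  qed
  moreover have "mtrace (outer v v) = 1"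
    using arg_cong[OF unit, of cnj] v unfolding mtrace_def by (simp add: outer_def cnj_sum mult.commute)
  ultimately show ?thesis unfolding is_state_def using hermitian_mat_outer[OF v] by blast
qed

lemma zero_discord_exists:
  assumes "m \<ge> 1" "n \<ge> 1"
  shows "\<exists>\<chi>. zero_discord m n \<chi>"
proof -
  let ?p = "\<lambda>k::nat. if k = 0 then 1 else (0::real)"
  have "is_state n (outer (unit_vec n 0) (unit_vec n 0))"
    using orthonormal_basis_orth[OF unit_vec_orthonormal_basis, of 0 n 0] assms(2)
    by (intro is_state_outer) auto
  moreover have "(\<Sum>k<m. ?p k) = 1" using assms(1) by simp
  ultimately have "zero_discord m n (cq_state m n (unit_vec m) ?p (\<lambda>_. outer (unit_vec n 0) (unit_vec n 0)))"
    unfolding zero_discord_def cq_state_def using unit_vec_orthonormal_basis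
    by (intro exI[of _ "unit_vec m"] exI[of _ ?p] exI[of _ "\<lambda>_. outer (unit_vec n 0) (unit_vec n 0)"]) auto
  then show ?thesis by blast
qed

theorem mainTheorem2:
  fixes m n :: nat and lamA lamB :: "nat \<Rightarrow> complex mat" and \<rho> :: "complex mat"
  assumes "m \<ge> 2" and "n \<ge> 2"
    and "su_generators m lamA" and "su_generators n lamB"
    and "is_state (m*n) \<rho>"
  shows "D_P m n lamA lamB \<rho> \<le> D_G m n \<rho>"
  unfolding D_P_def D_G_def
proof (rule cInf_mono)
  obtain \<chi> where "zero_discord m n \<chi>" using zero_discord_exists assms(1,2) by fastforce
  then show "{Re (mtrace ((\<rho> - \<chi>) * (\<rho> - \<chi>))) | \<chi>. zero_discord m n \<chi>} \<noteq> {}" by blast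
next
  show "bdd_below {frob_sq (left_corr m n lamA lamB \<rho> - P * left_corr m n lamA lamB \<rho>) | P. orth_proj_rank (m\<^sup>2 - 1) (m - 1) P}"
    by (rule bdd_belowI[of _ 0]) (auto simp: frob_sq_def intro!: sum_nonneg)
next
  fix b assume "b \<in> {Re (mtrace ((\<rho> - \<chi>) * (\<rho> - \<chi>))) | \<chi>. zero_discord m n \<chi>}"
  then obtain \<chi> where b: "b = Re (mtrace ((\<rho> - \<chi>) * (\<rho> - \<chi>)))" and zd: "zero_discord m n \<chi>" by blast
  from left_corr_dist_le_hs_dist[OF assms zd] b
  show "\<exists>a\<in>{frob_sq (left_corr m n lamA lamB \<rho> - P * left_corr m n lamA lamB \<rho>) | P. orth_proj_rank (m\<^sup>2 - 1) (m - 1) P}. a \<le> b"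
    by blast
qed

end
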